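(* Let $K$ be a division ring and $G$ a group. If $a\in K[G]$ is one-sided invertible and of rank $2$, then $a$ is invertible. Furthermore, a rank $2$ element $a$ of $K[G]$ is invertible if and only if it is of the form $a=sh(1-rg)$ for some $s,r\in K\setminus\{0\}$ and $g,h\in G$, where $g$ has finite order $n>1$ and $r^n\ne1$; in that case $a^{-1}=(1-r^n)^{-1}(1+rg+r^2g^2+\dots+r^{n-1}g^{n-1})h^{-1}s^{-1}$.
   Context: $K[G]$ is the group ring (coefficients from $K$ commute with group elements). The rank of $a\in K[G]$ is the number of group elements with nonzero coefficient in $a$. *)

theory Defs
  imports "HOL-Algebra.Multiplicative_Group"
begin

text \<open>Coefficients commute with group elements.\<close>

definition gr_supp :: "('g \<Rightarrow> 'k::division_ring) \<Rightarrow> 'g set" where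
  "gr_supp a = {x. a x \<noteq> 0}"

definition gr_elem :: "('g, 'm) monoid_scheme \<Rightarrow> ('g \<Rightarrow> 'k::division_ring) \<Rightarrow> bool" where
  "gr_elem G a \<longleftrightarrow> finite (gr_supp a) \<and> gr_supp a \<subseteq> carrier G"

definition gr_rank :: "('g \<Rightarrow> 'k::division_ring) \<Rightarrow> nat" where
  "gr_rank a = card (gr_supp a)"

definition gr_mult :: "('g, 'm) monoid_scheme \<Rightarrow> ('g \<Rightarrow> 'k::division_ring) \<Rightarrow> ('g \<Rightarrow> 'k) \<Rightarrow> ('g \<Rightarrow> 'k)" where
  "gr_mult G a b = (\<lambda>z. if z \<in> carrier G
      then (\<Sum>x\<in>gr_supp a. a x * b (inv\<^bsub>G\<^esub> x \<otimes>\<^bsub>G\<^esub> z)) else 0)"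

definition gr_of :: "'k::division_ring \<Rightarrow> 'g \<Rightarrow> ('g \<Rightarrow> 'k)" where
  "gr_of c g = (\<lambda>z. if z = g then c else 0)"

definition gr_one :: "('g, 'm) monoid_scheme \<Rightarrow> ('g \<Rightarrow> 'k::division_ring)" where
  "gr_one G = gr_of 1 \<one>\<^bsub>G\<^esub>"

definition gr_minus :: "('g \<Rightarrow> 'k::division_ring) \<Rightarrow> ('g \<Rightarrow> 'k) \<Rightarrow> ('g \<Rightarrow> 'k)" where
  "gr_minus a b = (\<lambda>z. a z - b z)"

definition gr_invertible :: "('g, 'm) monoid_scheme \<Rightarrow> ('g \<Rightarrow> 'k::division_ring) \<Rightarrow> bool" where
  "gr_invertible G a \<longleftrightarrow> (\<exists>b. gr_elem G b \<and> gr_mult G a b = gr_one G \<and> gr_mult G b a = gr_one G)"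

definition gr_one_sided_invertible :: "('g, 'm) monoid_scheme \<Rightarrow> ('g \<Rightarrow> 'k::division_ring) \<Rightarrow> bool" where
  "gr_one_sided_invertible G a \<longleftrightarrow>
     (\<exists>b. gr_elem G b \<and> (gr_mult G a b = gr_one G \<or> gr_mult G b a = gr_one G))"

end

theory Submission
  imports Defs
begin

text \<open>Write a rank-two element as a = s h (1 - r g).  If a b = 1 (or b a = 1), the
coefficients of b along the powers of g satisfy a first-order recurrence
F (g^i) = [g^i = 1] c + r F (g^(i-1)) with c \<noteq> 0 (with r acting on the right in the
case b a = 1).  If g had infinite order, the recurrence would force infinitely many
nonzero coefficients, contradicting finite support; if g has order n, going once
around the cycle gives F 1 = c + r^n F 1, so r^n \<noteq> 1.  Conversely, the geometric
sum of the r^i g^i for i < n telescopes against 1 - r g to 1 - r^n, which yields the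
explicit two-sided inverse.\<close>

lemma recurrence_support_infinite:
  fixes f :: "int \<Rightarrow> 'a::monoid_add"
  assumes \<phi>: "\<And>x. \<phi> x = 0 \<longleftrightarrow> x = 0" and c: "c \<noteq> 0"
    and rec: "\<And>i. f i = (if i = 0 then c else 0) + \<phi> (f (i - 1))"
  shows "infinite {i. f i \<noteq> 0}"
proof -
  have step: "f i \<noteq> 0 \<longleftrightarrow> f (i - 1) \<noteq> 0" if "i \<noteq> 0" for i
    using rec[of i] that \<phi> by simp
  have "f 0 \<noteq> 0 \<or> f (- 1) \<noteq> 0"
    using rec[of 0] c \<phi>[of 0] by auto
  then consider "range int \<subseteq> {i. f i \<noteq> 0}" | "range (\<lambda>k. - int k - 1) \<subseteq> {i. f i \<noteq> 0}"
  proof (elim disjE)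
    assume "f 0 \<noteq> 0"
    then have "f (int k) \<noteq> 0" for k
      by (induction k) (use step in \<open>auto simp: of_nat_Suc\<close>)
    then show thesis using that(1) by blast
  next
    assume "f (- 1) \<noteq> 0"
    then have "f (- int k - 1) \<noteq> 0" for k
    proof (induction k)
      case (Suc k)
      then show ?case using step[of "- int k - 1"] by (simp add: algebra_simps)
    qed simp
    then show thesis using that(2) by blast
  qed
  moreover have "inj int" "inj (\<lambda>k::nat. - int k - 1)"
    by (auto intro: injI)
  ultimately show ?thesis
    by (metis finite_subset infinite_UNIV_nat finite_imageD)
qed

lemma periodic_recurrence_funpow_neq:
  fixes f :: "int \<Rightarrow> 'a::group_add"
  assumes rec: "\<And>i. f i = (if int n dvd i then c else 0) + \<phi> (f (i - 1))"
    and n: "n > 0" and period: "f n = f 0" and c: "c \<noteq> 0"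
  shows "(\<phi> ^^ n) (f 0) \<noteq> f 0"
proof
  have "k < n \<Longrightarrow> f (int k) = (\<phi> ^^ k) (f 0)" for k
  proof (induction k)
    case (Suc k)
    have "\<not> int n dvd int (Suc k)"
      unfolding int_dvd_int_iff using Suc.prems by (simp add: nat_dvd_not_less)
    then show ?case using rec[of "int (Suc k)"] Suc by simp
  qed simp
  then have "f n = c + (\<phi> ^^ n) (f 0)"
    using rec[of n] n by (cases n) auto
  moreover assume "(\<phi> ^^ n) (f 0) = f 0"
  ultimately show False using period c by (metis add_0 add_right_cancel)
qed

lemma funpow_mult_left: "((*) x ^^ n) = (*) ((x::'a::monoid_mult) ^ n)"
  by (induction n) (simp_all add: mult.assoc)

lemma funpow_mult_right: "((\<lambda>y. y * x) ^^ n) = (\<lambda>y. y * (x::'a::monoid_mult) ^ n)"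
  by (induction n) (auto simp: mult.assoc power_commutes)

context group begin

lemma gr_supp_gr_of: "gr_supp (gr_of c g) = (if c = 0 then {} else {g})"
  by (auto simp: gr_supp_def gr_of_def)

lemma gr_supp_gr_of_subset: "gr_supp (gr_of c g) \<subseteq> {g}"
  by (simp add: gr_supp_gr_of)

lemma gr_elem_gr_of: "g \<in> carrier G \<Longrightarrow> gr_elem G (gr_of c g)"
  by (simp add: gr_elem_def gr_supp_gr_of)

lemma gr_one_apply: "gr_one G z = (if z = \<one> then 1 else 0)"
  by (simp add: gr_one_def gr_of_def)

lemma gr_mult_apply:
  assumes "gr_supp a \<subseteq> S" "finite S"
  shows "gr_mult G a b z = (if z \<in> carrier G then \<Sum>x\<in>S. a x * b (inv x \<otimes> z) else 0)"
  unfolding gr_mult_def using assms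
  by (auto intro!: sum.mono_neutral_left simp: gr_supp_def)

lemma gr_mult_apply_right:
  assumes b: "gr_elem G b" and S: "gr_supp a \<subseteq> S" "finite S" "S \<subseteq> carrier G"
    and z: "z \<in> carrier G"
  shows "gr_mult G b a z = (\<Sum>u\<in>S. b (z \<otimes> inv u) * a u)"
proof -
  let ?\<phi> = "\<lambda>u. z \<otimes> inv u"
  have supp_b: "finite (gr_supp b)" "gr_supp b \<subseteq> carrier G"
    using b by (auto simp: gr_elem_def)
  have inj: "inj_on ?\<phi> S"
    using S z by (intro inj_onI) (metis Units_eq Units_l_cancel inv_closed inv_inv subsetD)
  have inv_\<phi>: "inv (?\<phi> u) \<otimes> z = u" if "u \<in> carrier G" for u
    using that z by (simp add: inv_mult_group m_assoc)
  have "gr_mult G b a z = (\<Sum>x\<in>gr_supp b. b x * a (inv x \<otimes> z))"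
    using z by (simp add: gr_mult_def)
  also have "\<dots> = (\<Sum>x\<in>gr_supp b \<union> ?\<phi> ` S. b x * a (inv x \<otimes> z))"
  proof (rule sum.mono_neutral_left)
    show "\<forall>x\<in>gr_supp b \<union> ?\<phi> ` S - gr_supp b. b x * a (inv x \<otimes> z) = 0"
      by (auto simp: gr_supp_def)
  qed (use supp_b S in auto)
  also have "\<dots> = (\<Sum>x\<in>?\<phi> ` S. b x * a (inv x \<otimes> z))"
  proof (rule sum.mono_neutral_right)
    show "\<forall>x\<in>gr_supp b \<union> ?\<phi> ` S - ?\<phi> ` S. b x * a (inv x \<otimes> z) = 0"
    proof
      fix x assume x: "x \<in> gr_supp b \<union> ?\<phi> ` S - ?\<phi> ` S"
      then have "x \<in> carrier G" using supp_b by auto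
      then have "?\<phi> (inv x \<otimes> z) = x" using z by (simp add: inv_mult_group m_assoc[symmetric])
      then have "inv x \<otimes> z \<notin> S" using x by force
      then show "b x * a (inv x \<otimes> z) = 0" using S by (auto simp: gr_supp_def)
    qed
  qed (use supp_b S in auto)
  also have "\<dots> = (\<Sum>u\<in>S. b (z \<otimes> inv u) * a u)"
    using S inv_\<phi> by (simp add: sum.reindex[OF inj] subset_iff)
  finally show ?thesis .
qed

lemma gr_mult_gr_of_apply:
  "z \<in> carrier G \<Longrightarrow> gr_mult G (gr_of c x) b z = c * b (inv x \<otimes> z)"
  using gr_mult_apply[of "gr_of c x" "{x}" b z] gr_supp_gr_of_subset[of c x] by (simp add: gr_of_def)

lemma gr_mult_apply_gr_of:
  "gr_elem G b \<Longrightarrow> x \<in> carrier G \<Longrightarrow> z \<in> carrier G \<Longrightarrow>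
    gr_mult G b (gr_of c x) z = b (z \<otimes> inv x) * c"
  using gr_mult_apply_right[of b "gr_of c x" "{x}" z] gr_supp_gr_of_subset[of c x]
  by (simp add: gr_of_def)

lemma gr_mult_two_point_apply:
  assumes "gr_supp a \<subseteq> {x, y}" "x \<noteq> y" "z \<in> carrier G"
  shows "gr_mult G a b z = a x * b (inv x \<otimes> z) + a y * b (inv y \<otimes> z)"
  using gr_mult_apply[OF assms(1)] assms(2,3) by simp

lemma gr_mult_apply_two_point:
  assumes "gr_elem G b" "gr_supp a \<subseteq> {x, y}" "x \<noteq> y"
    "x \<in> carrier G" "y \<in> carrier G" "z \<in> carrier G"
  shows "gr_mult G b a z = b (z \<otimes> inv x) * a x + b (z \<otimes> inv y) * a y"
  using gr_mult_apply_right[OF assms(1,2)] assms(3-6) by simp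

lemma gr_elem_gr_mult:
  assumes a: "gr_elem G a" and b: "gr_elem G b"
  shows "gr_elem G (gr_mult G a b)"
proof -
  have "gr_supp (gr_mult G a b) \<subseteq> (\<lambda>(x, y). x \<otimes> y) ` (gr_supp a \<times> gr_supp b)"
  proof
    fix z assume z: "z \<in> gr_supp (gr_mult G a b)"
    then have zG: "z \<in> carrier G" and "(\<Sum>x\<in>gr_supp a. a x * b (inv x \<otimes> z)) \<noteq> 0"
      by (auto simp: gr_supp_def gr_mult_def split: if_splits)
    then obtain x where x: "x \<in> gr_supp a" "a x * b (inv x \<otimes> z) \<noteq> 0"
      by (meson sum.not_neutral_contains_not_neutral)
    then have "x \<in> carrier G" "inv x \<otimes> z \<in> gr_supp b"
      using a by (auto simp: gr_elem_def gr_supp_def)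
    moreover have "z = x \<otimes> (inv x \<otimes> z)"
      using \<open>x \<in> carrier G\<close> zG by (simp add: m_assoc[symmetric])
    ultimately show "z \<in> (\<lambda>(x, y). x \<otimes> y) ` (gr_supp a \<times> gr_supp b)"
      using x(1) by force
  qed
  then have "finite (gr_supp (gr_mult G a b))"
    using a b by (auto simp: gr_elem_def intro: finite_subset)
  moreover have "gr_supp (gr_mult G a b) \<subseteq> carrier G"
    by (auto simp: gr_supp_def gr_mult_def)
  ultimately show ?thesis
    by (simp add: gr_elem_def)
qed

lemma gr_of_mult_one_minus_apply:
  assumes "h \<in> carrier G" "g \<in> carrier G" "z \<in> carrier G"
  shows "gr_mult G (gr_of s h) (gr_minus (gr_one G) (gr_of r g)) z =
    (if z = h then s else 0) - (if z = h \<otimes> g then s * r else 0)"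
  unfolding gr_mult_gr_of_apply[OF assms(3)]
  using assms by (simp add: gr_minus_def gr_one_apply gr_of_def inv_solve_left' right_diff_distrib)

lemma gr_supp_gr_of_mult_one_minus:
  assumes "h \<in> carrier G" "g \<in> carrier G"
  shows "gr_supp (gr_mult G (gr_of s h) (gr_minus (gr_one G) (gr_of r g))) \<subseteq> {h, h \<otimes> g}"
proof
  fix z assume z: "z \<in> gr_supp (gr_mult G (gr_of s h) (gr_minus (gr_one G) (gr_of r g)))"
  then have "z \<in> carrier G" by (auto simp: gr_supp_def gr_mult_def split: if_splits)
  with z assms show "z \<in> {h, h \<otimes> g}"
    by (auto simp: gr_supp_def gr_of_mult_one_minus_apply split: if_splits)
qed

lemma rank_two_decompose:
  fixes a :: "'a \<Rightarrow> 'k::division_ring"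
  assumes a: "gr_elem G a" and rank: "gr_rank a = 2"
  obtains x g where "x \<in> carrier G" "g \<in> carrier G" "g \<noteq> \<one>" "gr_supp a = {x, x \<otimes> g}"
    "a = gr_mult G (gr_of (a x) x) (gr_minus (gr_one G) (gr_of (- (inverse (a x) * a (x \<otimes> g))) g))"
proof -
  obtain x y where xy: "gr_supp a = {x, y}" "x \<noteq> y"
    using rank by (auto simp: gr_rank_def card_2_iff)
  then have xG: "x \<in> carrier G" and yG: "y \<in> carrier G"
    using a by (auto simp: gr_elem_def)
  define g where "g = inv x \<otimes> y"
  have g: "g \<in> carrier G" "g \<noteq> \<one>" and y: "y = x \<otimes> g"
    using xG yG xy(2) by (auto simp: g_def m_assoc[symmetric] inv_solve_left')
  have supp: "gr_supp a = {x, x \<otimes> g}"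
    using xy(1) y by simp
  have ax: "a x \<noteq> 0"
    using supp by (auto simp: gr_supp_def)
  have "a = gr_mult G (gr_of (a x) x) (gr_minus (gr_one G) (gr_of (- (inverse (a x) * a (x \<otimes> g))) g))"
  proof (rule ext)
    fix z
    show "a z = gr_mult G (gr_of (a x) x) (gr_minus (gr_one G) (gr_of (- (inverse (a x) * a (x \<otimes> g))) g)) z"
    proof (cases "z \<in> carrier G")
      case True
      have "a x * - (inverse (a x) * a (x \<otimes> g)) = - a (x \<otimes> g)"
        using ax by (simp add: mult.assoc[symmetric])
      moreover have "a z = 0" if "z \<noteq> x" "z \<noteq> x \<otimes> g"
        using supp that by (auto simp: gr_supp_def)
      ultimately show ?thesis
        using True xG g by (simp add: gr_of_mult_one_minus_apply)
    next
      case False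
      then show ?thesis
        using a by (auto simp: gr_elem_def gr_supp_def gr_mult_def)
    qed
  qed
  from that[OF xG g supp this] show thesis .
qed

definition geom_series :: "'k::division_ring \<Rightarrow> 'a \<Rightarrow> 'a \<Rightarrow> 'k" where
  "geom_series r g = (\<lambda>t. \<Sum>i<ord g. gr_of (r ^ i) (g [^] i) t)"

lemma gr_elem_geom_series:
  assumes "g \<in> carrier G"
  shows "gr_elem G (geom_series r g)"
proof -
  have "gr_supp (geom_series r g) \<subseteq> (\<lambda>i. g [^] i) ` {..<ord g}"
    by (auto simp: gr_supp_def geom_series_def gr_of_def elim!: sum.not_neutral_contains_not_neutral
        split: if_splits)
  with assms show ?thesis
    by (auto simp: gr_elem_def intro: finite_subset)
qed

lemma geom_series_telescope:
  assumes g: "g \<in> carrier G" and t: "t \<in> carrier G"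
  shows "geom_series r g t - r * geom_series r g (inv g \<otimes> t) = (if t = \<one> then 1 - r ^ ord g else 0)"
    and "geom_series r g t - geom_series r g (t \<otimes> inv g) * r = (if t = \<one> then 1 - r ^ ord g else 0)"
proof -
  define f where "f i = (if t = g [^] i then r ^ i else 0)" for i
  have "f 0 - f (ord g) = (if t = \<one> then 1 - r ^ ord g else 0)"
    using g by (simp add: f_def)
  moreover have "(\<Sum>i<ord g. f (Suc i)) - (\<Sum>i<ord g. f i) = f (ord g) - f 0"
    using sum_lessThan_telescope[of f "ord g"] by (simp add: sum_subtractf)
  ultimately have f_telescope:
    "(\<Sum>i<ord g. f i) - (\<Sum>i<ord g. f (Suc i)) = (if t = \<one> then 1 - r ^ ord g else 0)"
    by (metis minus_diff_eq)
  have shift: "inv g \<otimes> t = g [^] i \<longleftrightarrow> t = g [^] Suc i"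
    "t \<otimes> inv g = g [^] i \<longleftrightarrow> t = g [^] Suc i" for i :: nat
    using g t by (simp add: inv_solve_left' flip: nat_pow_Suc2 del: nat_pow_Suc)
      (use inv_solve_right'[of "g [^] i" t g] g t in simp)
  have "geom_series r g t = (\<Sum>i<ord g. f i)"
    by (simp add: geom_series_def gr_of_def f_def)
  moreover have "r * geom_series r g (inv g \<otimes> t) = (\<Sum>i<ord g. f (Suc i))"
    unfolding geom_series_def sum_distrib_left
    by (rule sum.cong) (simp_all add: gr_of_def f_def shift(1))
  moreover have "geom_series r g (t \<otimes> inv g) * r = (\<Sum>i<ord g. f (Suc i))"
    unfolding geom_series_def sum_distrib_right
    by (rule sum.cong) (simp_all add: gr_of_def f_def shift(2) power_Suc2 power_commutes)
  ultimately show "geom_series r g t - r * geom_series r g (inv g \<otimes> t) = (if t = \<one> then 1 - r ^ ord g else 0)"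
    and "geom_series r g t - geom_series r g (t \<otimes> inv g) * r = (if t = \<one> then 1 - r ^ ord g else 0)"
    using f_telescope by simp_all
qed

lemma recurrence_along_powers:
  fixes F :: "'a \<Rightarrow> 'k::group_add"
  assumes g: "g \<in> carrier G" and \<phi>: "\<And>x. \<phi> x = 0 \<longleftrightarrow> x = 0" and c: "c \<noteq> 0"
    and fin: "finite {u \<in> carrier G. F u \<noteq> 0}"
    and rec: "\<And>i::int. F (g [^] i) = (if g [^] i = \<one> then c else 0) + \<phi> (F (g [^] (i - 1)))"
  shows "0 < ord g" and "(\<phi> ^^ ord g) (F \<one>) \<noteq> F \<one>"
proof -
  define f where "f i = F (g [^] i)" for i :: int
  have rec_f: "f i = (if int (ord g) dvd i then c else 0) + \<phi> (f (i - 1))" for i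
    using rec[of i] int_pow_eq_id[OF g] by (simp add: f_def)
  show pos: "0 < ord g"
  proof (rule ccontr)
    assume "\<not> 0 < ord g"
    then have "f i = (if i = 0 then c else 0) + \<phi> (f (i - 1))" for i
      using rec_f[of i] by simp
    then have "infinite {i. f i \<noteq> 0}"
      by (rule recurrence_support_infinite[OF \<phi> c])
    moreover have "inj_on (\<lambda>i. g [^] i) {i. f i \<noteq> 0}"
      using \<open>\<not> 0 < ord g\<close> by (auto intro!: inj_onI simp: int_pow_eq[OF g])
    moreover have "(\<lambda>i. g [^] i) ` {i. f i \<noteq> 0} \<subseteq> {u \<in> carrier G. F u \<noteq> 0}"
      using g by (auto simp: f_def)
    ultimately show False
      using fin finite_subset finite_imageD by blast
  qed
  have "f (int (ord g)) = f 0"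
    using g by (simp add: f_def int_pow_int)
  from periodic_recurrence_funpow_neq[OF rec_f pos this c]
  show "(\<phi> ^^ ord g) (F \<one>) \<noteq> F \<one>"
    by (simp add: f_def)
qed

lemma int_pow_diff_one:
  assumes "g \<in> carrier G"
  shows "g [^] (i - 1 :: int) = inv g \<otimes> g [^] i" and "g [^] (i - 1 :: int) = g [^] i \<otimes> inv g"
  using int_pow_mult[OF assms, of "- 1" i] int_pow_diff[OF assms, of i 1] assms
  by (simp_all add: int_pow_neg)

lemma finite_translated_support:
  assumes "gr_elem G b" "x \<in> carrier G"
  shows "finite {u \<in> carrier G. b (u \<otimes> inv x) \<noteq> 0}"
proof -
  have "{u \<in> carrier G. b (u \<otimes> inv x) \<noteq> 0} \<subseteq> (\<lambda>v. v \<otimes> x) ` gr_supp b"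
    using assms(2) by (force simp: gr_supp_def m_assoc)
  then show ?thesis
    using assms(1) by (auto simp: gr_elem_def intro: finite_subset)
qed

lemma two_point_right_inverse_order:
  fixes a :: "'a \<Rightarrow> 'k::division_ring"
  assumes x: "x \<in> carrier G" and g: "g \<in> carrier G" "g \<noteq> \<one>"
    and supp: "gr_supp a = {x, x \<otimes> g}" and b: "gr_elem G b" and ab: "gr_mult G a b = gr_one G"
  defines "r \<equiv> - (inverse (a x) * a (x \<otimes> g))"
  shows "0 < ord g" and "r ^ ord g \<noteq> 1"
proof -
  have ax: "a x \<noteq> 0" and r: "r \<noteq> 0"
    using supp by (auto simp: gr_supp_def r_def)
  define F where "F u = b (u \<otimes> inv x)" for u
  have rec: "F u = (if u = \<one> then inverse (a x) else 0) + r * F (inv g \<otimes> u)"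
    if u: "u \<in> carrier G" for u
  proof -
    let ?z = "x \<otimes> u \<otimes> inv x"
    have cancel: "inv x \<otimes> (x \<otimes> y) = y" if "y \<in> carrier G" for y
      using x that by (simp add: m_assoc[symmetric])
    have "inv x \<otimes> ?z = u \<otimes> inv x" "inv (x \<otimes> g) \<otimes> ?z = inv g \<otimes> u \<otimes> inv x"
      using x g u by (simp_all add: m_assoc inv_mult_group cancel)
    then have "a x * F u + a (x \<otimes> g) * F (inv g \<otimes> u) = gr_mult G a b ?z"
      using gr_mult_two_point_apply[of a x "x \<otimes> g" ?z b] supp x g u by (simp add: F_def m_assoc)
    also have "\<dots> = (if u = \<one> then 1 else 0)"
      using ab x u by (simp add: gr_one_apply inv_solve_right')
    finally have "a x * F u = (if u = \<one> then 1 else 0) - a (x \<otimes> g) * F (inv g \<otimes> u)"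
      by (simp add: eq_diff_eq)
    then have "F u = inverse (a x) * ((if u = \<one> then 1 else 0) - a (x \<otimes> g) * F (inv g \<otimes> u))"
      using ax by (metis left_inverse mult.assoc mult_1_left)
    then show ?thesis
      by (simp add: r_def algebra_simps)
  qed
  have rec_pow: "F (g [^] i) = (if g [^] i = \<one> then inverse (a x) else 0) + r * F (g [^] (i - 1))"
    for i :: int
    unfolding int_pow_diff_one(1)[OF g(1)] by (rule rec) (use g in simp)
  have "\<And>y. r * y = 0 \<longleftrightarrow> y = 0" "inverse (a x) \<noteq> 0"
    using r ax by simp_all
  from recurrence_along_powers[OF g(1) this finite_translated_support[OF b x, folded F_def] rec_pow]
  show "0 < ord g" "r ^ ord g \<noteq> 1"
    by (simp_all add: funpow_mult_left)
qed

lemma two_point_left_inverse_order: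
  fixes a :: "'a \<Rightarrow> 'k::division_ring"
  assumes x: "x \<in> carrier G" and g: "g \<in> carrier G" "g \<noteq> \<one>"
    and supp: "gr_supp a = {x, x \<otimes> g}" and b: "gr_elem G b" and ba: "gr_mult G b a = gr_one G"
  defines "r \<equiv> - (inverse (a x) * a (x \<otimes> g))"
  shows "0 < ord g" and "r ^ ord g \<noteq> 1"
proof -
  have ax: "a x \<noteq> 0" and r: "r \<noteq> 0"
    using supp by (auto simp: gr_supp_def r_def)
  have cancel_ax: "a x * (inverse (a x) * y) = y" for y
    using ax by (simp flip: mult.assoc)
  \<comment> \<open>scaling by a x on the right makes the multiplier of the recurrence r itself\<close>
  define F where "F u = b (u \<otimes> inv x) * a x" for u
  have rec: "F u = (if u = \<one> then 1 else 0) + F (u \<otimes> inv g) * r"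
    if u: "u \<in> carrier G" for u
  proof -
    have "u \<otimes> inv (x \<otimes> g) = u \<otimes> inv g \<otimes> inv x"
      using x g u by (simp add: m_assoc inv_mult_group)
    then have "F u + b (u \<otimes> inv g \<otimes> inv x) * a (x \<otimes> g) = gr_mult G b a u"
      using gr_mult_apply_two_point[OF b, of a x "x \<otimes> g" u] supp x g u by (simp add: F_def)
    also have "\<dots> = (if u = \<one> then 1 else 0)"
      using ba by (simp add: gr_one_apply)
    finally have "F u = (if u = \<one> then 1 else 0) - b (u \<otimes> inv g \<otimes> inv x) * a (x \<otimes> g)"
      by (simp add: eq_diff_eq)
    moreover have "F (u \<otimes> inv g) * r = - (b (u \<otimes> inv g \<otimes> inv x) * a (x \<otimes> g))"
      unfolding F_def r_def by (simp only: mult.assoc cancel_ax mult_minus_right)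
    ultimately show ?thesis
      by simp
  qed
  have rec_pow: "F (g [^] i) = (if g [^] i = \<one> then 1 else 0) + F (g [^] (i - 1)) * r"
    for i :: int
    unfolding int_pow_diff_one(2)[OF g(1)] by (rule rec) (use g in simp)
  have "\<And>y. y * r = 0 \<longleftrightarrow> y = 0"
    using r by simp
  moreover have "finite {u \<in> carrier G. F u \<noteq> 0}"
    by (rule finite_subset[OF _ finite_translated_support[OF b x]]) (auto simp: F_def)
  ultimately have "0 < ord g" "((\<lambda>y. y * r) ^^ ord g) (F \<one>) \<noteq> F \<one>"
    using recurrence_along_powers[OF g(1) _ one_neq_zero _ rec_pow] by blast+
  then show "0 < ord g" "r ^ ord g \<noteq> 1"
    by (auto simp: funpow_mult_right)
qed

lemma two_point_one_sided_inverse_order: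
  fixes a :: "'a \<Rightarrow> 'k::division_ring"
  assumes x: "x \<in> carrier G" and g: "g \<in> carrier G" "g \<noteq> \<one>"
    and supp: "gr_supp a = {x, x \<otimes> g}" and invertible: "gr_one_sided_invertible G a"
  defines "r \<equiv> - (inverse (a x) * a (x \<otimes> g))"
  shows "1 < ord g" and "r ^ ord g \<noteq> 1"
proof -
  obtain b where b: "gr_elem G b" and "gr_mult G a b = gr_one G \<or> gr_mult G b a = gr_one G"
    using invertible unfolding gr_one_sided_invertible_def by blast
  then have "0 < ord g \<and> r ^ ord g \<noteq> 1"
    using two_point_right_inverse_order[OF x g supp b] two_point_left_inverse_order[OF x g supp b]
    by (auto simp: r_def)
  then show "1 < ord g" "r ^ ord g \<noteq> 1"
    using ord_eq_1[OF g(1)] g(2) by auto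
qed

lemma rank_two_one_sided_invertible_form:
  fixes a :: "'a \<Rightarrow> 'k::division_ring"
  assumes "gr_elem G a" "gr_rank a = 2" "gr_one_sided_invertible G a"
  shows "\<exists>s r g h. s \<noteq> 0 \<and> r \<noteq> 0 \<and> g \<in> carrier G \<and> h \<in> carrier G \<and>
    1 < ord g \<and> r ^ ord g \<noteq> 1 \<and> a = gr_mult G (gr_of s h) (gr_minus (gr_one G) (gr_of r g))"
proof -
  obtain x g where x: "x \<in> carrier G" and g: "g \<in> carrier G" "g \<noteq> \<one>"
    and supp: "gr_supp a = {x, x \<otimes> g}"
    and a: "a = gr_mult G (gr_of (a x) x) (gr_minus (gr_one G) (gr_of (- (inverse (a x) * a (x \<otimes> g))) g))"
    by (rule rank_two_decompose[OF assms(1,2)])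
  define r where "r = - (inverse (a x) * a (x \<otimes> g))"
  have "a x \<noteq> 0" "r \<noteq> 0"
    using supp by (auto simp: gr_supp_def r_def)
  moreover have "1 < ord g" "r ^ ord g \<noteq> 1"
    using two_point_one_sided_inverse_order[OF x g supp assms(3)] by (simp_all add: r_def)
  moreover note x g(1) a[folded r_def]
  ultimately show ?thesis
    by (intro exI conjI) assumption+
qed

lemma gr_mult_eq_gr_one:
  assumes "\<And>z. z \<in> carrier G \<Longrightarrow> gr_mult G a b z = (if z = \<one> then 1 else 0)"
  shows "gr_mult G a b = gr_one G"
proof
  fix z
  show "gr_mult G a b z = gr_one G z"
    using assms by (cases "z \<in> carrier G") (auto simp: gr_one_apply gr_mult_def)
qed

definition geom_inverse :: "'k::division_ring \<Rightarrow> 'k \<Rightarrow> 'a \<Rightarrow> 'a \<Rightarrow> 'a \<Rightarrow> 'k" where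
  "geom_inverse s r g h =
    gr_mult G (gr_mult G (gr_of (inverse (1 - r ^ ord g)) \<one>) (geom_series r g)) (gr_of (inverse s) (inv h))"

lemma gr_elem_geom_inverse:
  "g \<in> carrier G \<Longrightarrow> h \<in> carrier G \<Longrightarrow> gr_elem G (geom_inverse s r g h)"
  by (simp add: geom_inverse_def gr_elem_gr_mult gr_elem_gr_of gr_elem_geom_series)

lemma geom_inverse_apply:
  assumes "g \<in> carrier G" "h \<in> carrier G" "z \<in> carrier G"
  shows "geom_inverse s r g h z = inverse (1 - r ^ ord g) * geom_series r g (z \<otimes> h) * inverse s"
  using assms
  by (simp add: geom_inverse_def gr_mult_apply_gr_of gr_mult_gr_of_apply gr_elem_gr_mult
      gr_elem_gr_of gr_elem_geom_series)

lemma gr_mult_one_minus_geom_inverse: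
  fixes r s :: "'k::division_ring"
  assumes g: "g \<in> carrier G" "1 < ord g" and h: "h \<in> carrier G" and s: "s \<noteq> 0"
    and rn: "r ^ ord g \<noteq> 1"
  shows "gr_mult G (gr_mult G (gr_of s h) (gr_minus (gr_one G) (gr_of r g))) (geom_inverse s r g h) =
    gr_one G"
proof (rule gr_mult_eq_gr_one)
  fix z assume z: "z \<in> carrier G"
  define c where "c = inverse (1 - r ^ ord g)"
  have "r * c = c * r"
    unfolding c_def by (rule mult_commute_imp_mult_inverse_commute[symmetric])
      (simp add: left_diff_distrib right_diff_distrib power_commutes)
  then have rc: "r * (c * y) = c * (r * y)" for y
    by (simp flip: mult.assoc)
  define t where "t = inv h \<otimes> z \<otimes> h"
  have t: "t \<in> carrier G" "t = \<one> \<longleftrightarrow> z = \<one>"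
    using h z by (auto simp: t_def m_assoc inv_solve_left')
  have hg: "h \<noteq> h \<otimes> g"
    using g h by auto
  have "geom_inverse s r g h (inv h \<otimes> z) = c * geom_series r g t * inverse s"
    "geom_inverse s r g h (inv (h \<otimes> g) \<otimes> z) = c * geom_series r g (inv g \<otimes> t) * inverse s"
    using g h z by (simp_all add: geom_inverse_apply c_def t_def m_assoc inv_mult_group)
  moreover have "gr_mult G (gr_mult G (gr_of s h) (gr_minus (gr_one G) (gr_of r g))) (geom_inverse s r g h) z
    = s * geom_inverse s r g h (inv h \<otimes> z) + - (s * r) * geom_inverse s r g h (inv (h \<otimes> g) \<otimes> z)"
    using gr_mult_two_point_apply[OF gr_supp_gr_of_mult_one_minus[OF h g(1)] hg z] g h hg
    by (simp add: gr_of_mult_one_minus_apply)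
  ultimately have "gr_mult G (gr_mult G (gr_of s h) (gr_minus (gr_one G) (gr_of r g))) (geom_inverse s r g h) z
    = s * (c * (geom_series r g t - r * geom_series r g (inv g \<otimes> t))) * inverse s"
    by (simp add: mult.assoc rc right_diff_distrib left_diff_distrib)
  also have "\<dots> = s * (c * (if z = \<one> then 1 - r ^ ord g else 0)) * inverse s"
    by (simp only: geom_series_telescope(1)[OF g(1) t(1)] t(2))
  also have "\<dots> = (if z = \<one> then 1 else 0)"
    using rn s by (simp add: c_def)
  finally show "gr_mult G (gr_mult G (gr_of s h) (gr_minus (gr_one G) (gr_of r g))) (geom_inverse s r g h) z
    = (if z = \<one> then 1 else 0)" .
qed

lemma gr_mult_geom_inverse_one_minus:
  fixes r s :: "'k::division_ring"
  assumes g: "g \<in> carrier G" "1 < ord g" and h: "h \<in> carrier G" and s: "s \<noteq> 0"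
    and rn: "r ^ ord g \<noteq> 1"
  shows "gr_mult G (geom_inverse s r g h) (gr_mult G (gr_of s h) (gr_minus (gr_one G) (gr_of r g))) =
    gr_one G"
proof (rule gr_mult_eq_gr_one)
  fix z assume z: "z \<in> carrier G"
  define c where "c = inverse (1 - r ^ ord g)"
  have inverse_s: "inverse s * (s * y) = y" for y
    using s by (simp flip: mult.assoc)
  have hg: "h \<noteq> h \<otimes> g" "h \<otimes> g \<in> carrier G"
    using g h by auto
  have "geom_inverse s r g h (z \<otimes> inv h) = c * geom_series r g z * inverse s"
    "geom_inverse s r g h (z \<otimes> inv (h \<otimes> g)) = c * geom_series r g (z \<otimes> inv g) * inverse s"
    using g h z by (simp_all add: geom_inverse_apply c_def m_assoc inv_mult_group)
  moreover have "gr_mult G (geom_inverse s r g h) (gr_mult G (gr_of s h) (gr_minus (gr_one G) (gr_of r g))) z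
    = geom_inverse s r g h (z \<otimes> inv h) * s + geom_inverse s r g h (z \<otimes> inv (h \<otimes> g)) * - (s * r)"
    using gr_mult_apply_two_point[OF gr_elem_geom_inverse[OF g(1) h]
        gr_supp_gr_of_mult_one_minus[OF h g(1)] hg(1) h hg(2) z] g h hg
    by (simp add: gr_of_mult_one_minus_apply)
  ultimately have "gr_mult G (geom_inverse s r g h) (gr_mult G (gr_of s h) (gr_minus (gr_one G) (gr_of r g))) z
    = c * (geom_series r g z - geom_series r g (z \<otimes> inv g) * r)"
    using s by (simp add: mult.assoc right_diff_distrib inverse_s)
  also have "\<dots> = c * (if z = \<one> then 1 - r ^ ord g else 0)"
    by (simp only: geom_series_telescope(2)[OF g(1) z])
  also have "\<dots> = (if z = \<one> then 1 else 0)"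
    using rn by (simp add: c_def)
  finally show "gr_mult G (geom_inverse s r g h) (gr_mult G (gr_of s h) (gr_minus (gr_one G) (gr_of r g))) z
    = (if z = \<one> then 1 else 0)" .
qed

lemma gr_invertible_one_minus:
  fixes r s :: "'k::division_ring"
  assumes "g \<in> carrier G" "1 < ord g" "h \<in> carrier G" "s \<noteq> 0" "r ^ ord g \<noteq> 1"
  shows "gr_invertible G (gr_mult G (gr_of s h) (gr_minus (gr_one G) (gr_of r g)))"
  using gr_elem_geom_inverse[OF assms(1,3)] gr_mult_one_minus_geom_inverse[OF assms]
    gr_mult_geom_inverse_one_minus[OF assms]
  unfolding gr_invertible_def by blast

lemma rank_two_one_sided_invertible:
  fixes a :: "'a \<Rightarrow> 'k::division_ring"
  assumes "gr_elem G a" "gr_rank a = 2" "gr_one_sided_invertible G a"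
  shows "gr_invertible G a"
  using rank_two_one_sided_invertible_form[OF assms] gr_invertible_one_minus by blast

lemma rank_two_invertible_iff:
  fixes a :: "'a \<Rightarrow> 'k::division_ring"
  assumes "gr_elem G a" "gr_rank a = 2"
  shows "gr_invertible G a \<longleftrightarrow> (\<exists>s r g h. s \<noteq> 0 \<and> r \<noteq> 0 \<and> g \<in> carrier G \<and> h \<in> carrier G \<and>
    1 < ord g \<and> r ^ ord g \<noteq> 1 \<and> a = gr_mult G (gr_of s h) (gr_minus (gr_one G) (gr_of r g)))"
    (is "_ \<longleftrightarrow> ?form")
proof
  assume "gr_invertible G a"
  then have "gr_one_sided_invertible G a"
    unfolding gr_invertible_def gr_one_sided_invertible_def by blast
  with assms show ?form
    by (rule rank_two_one_sided_invertible_form)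
next
  assume ?form
  then show "gr_invertible G a"
    using gr_invertible_one_minus by blast
qed

end

theorem proposition2p2:
  fixes G :: "('g, 'm) monoid_scheme" and dummy :: "'k::division_ring"
  assumes "group G"
  shows
    "(\<forall>a :: 'g \<Rightarrow> 'k. gr_elem G a \<and> gr_rank a = 2 \<and> gr_one_sided_invertible G a
         \<longrightarrow> gr_invertible G a)
   \<and> (\<forall>a :: 'g \<Rightarrow> 'k. gr_elem G a \<and> gr_rank a = 2 \<longrightarrow>
         (gr_invertible G a \<longleftrightarrow>
           (\<exists>s r g h. s \<noteq> 0 \<and> r \<noteq> 0 \<and> g \<in> carrier G \<and> h \<in> carrier G \<and>
              group.ord G g > 1 \<and> r ^ group.ord G g \<noteq> 1 \<and>
              a = gr_mult G (gr_of s h) (gr_minus (gr_one G) (gr_of r g)))))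
   \<and> (\<forall>(a :: 'g \<Rightarrow> 'k) s r g h. gr_elem G a \<and> gr_rank a = 2 \<and>
         s \<noteq> 0 \<and> r \<noteq> 0 \<and> g \<in> carrier G \<and> h \<in> carrier G \<and>
         group.ord G g > 1 \<and> r ^ group.ord G g \<noteq> 1 \<and>
         a = gr_mult G (gr_of s h) (gr_minus (gr_one G) (gr_of r g)) \<longrightarrow>
         (let n = group.ord G g;
              b = gr_mult G
                    (gr_mult G (gr_of (inverse (1 - r ^ n)) \<one>\<^bsub>G\<^esub>)
                       (\<lambda>z. \<Sum>i<n. gr_of (r ^ i) (g [^]\<^bsub>G\<^esub> i) z))
                    (gr_of (inverse s) (inv\<^bsub>G\<^esub> h))
          in gr_elem G b \<and> gr_mult G a b = gr_one G \<and> gr_mult G b a = gr_one G))"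
proof -
  interpret group G by (fact assms)
  show ?thesis
    unfolding Let_def geom_series_def[symmetric] geom_inverse_def[symmetric]
    by (intro conjI allI impI; elim conjE)
      ((rule rank_two_one_sided_invertible rank_two_invertible_iff; assumption)+,
        simp_all add: gr_elem_geom_inverse gr_mult_one_minus_geom_inverse
          gr_mult_geom_inverse_one_minus)
qed

end
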